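(* Let $n\ge 3$ and let $P=(A_1,\dots,A_n)$ be a cyclic $n$-gon in the plane (distinct vertices lying on a circle) whose vertices are ordered anticlockwise around the circle. Then for all $a,b\in\{1,\dots,n\}$ (including the cases $b=a$, $b=a+1$ and $b=a-1$), with all indices taken modulo $n$ in $\{1,\dots,n\}$, the following three determinants vanish: \[ \begin{vmatrix} x_{b,b+1} & S_{a,b,b+1} & S_{a+1,b,b+1}\\ -x_{a,a+1} & S_{a,a+1,b} & S_{a,a+1,b+1}\\ 0 & x_{a,b} & x_{a+1,b+1} \end{vmatrix} = 0,\qquad \begin{vmatrix} x_{b,b+1} & S_{a,b,b+1} & S_{a+1,b,b+1}\\ x_{a,a+1} & S_{a,a+1,b+1} & S_{a,a+1,b}\\ 0 & x_{a,b+1} & x_{a+1,b} \end{vmatrix} = 0,\] \[\begin{vmatrix} x_{a+1,b} & S_{a,a+1,b} & S_{a+1,b,b+1}\\ -x_{a,b+1} & S_{a,b,b+1} & S_{a,a+1,b+1}\\ 0 & x_{a,b} & x_{a+1,b+1} \end{vmatrix} = 0.\] (Equivalently: these determinants vanish for every diamond, including the gluing diamonds, of the plane polygonal Heronian frieze of $P$, the diamond for $(a,b)$ being the one associated with the quadruple of vertices $(A_a,A_{a+1},A_b,A_{b+1})$.)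
   Context: For points $A_p=(x_p,y_p)$ in the plane, $x_{pq}:=(x_q-x_p)^2+(y_q-y_p)^2$ is the squared distance between $A_p$ and $A_q$ (so $x_{pp}=0$), and $S_{pqr}:=2[(x_q-x_p)(y_r-y_p)-(y_q-y_p)(x_r-x_p)]$ is four times the signed area of the triangle $A_pA_qA_r$ (so it vanishes if two of $p,q,r$ coincide, and is positive for anticlockwise-ordered vertices). *)

theory Defs
  imports Complex_Main
begin

text \<open>A plane polygon is given by coordinate functions px py, vertex A_i = (px i, py i), i = 1..n.\<close>

definition sqd :: "(nat \<Rightarrow> real) \<Rightarrow> (nat \<Rightarrow> real) \<Rightarrow> nat \<Rightarrow> nat \<Rightarrow> real" where
  "sqd px py p q = (px q - px p)^2 + (py q - py p)^2"

definition Sarea :: "(nat \<Rightarrow> real) \<Rightarrow> (nat \<Rightarrow> real) \<Rightarrow> nat \<Rightarrow> nat \<Rightarrow> nat \<Rightarrow> real" where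
  "Sarea px py p q r = 2 * ((px q - px p) * (py r - py p) - (py q - py p) * (px r - px p))"

definition modn :: "nat \<Rightarrow> nat \<Rightarrow> nat" where
  "modn n k = ((k + n - 1) mod n) + 1"

definition det3 :: "real \<Rightarrow> real \<Rightarrow> real \<Rightarrow> real \<Rightarrow> real \<Rightarrow> real \<Rightarrow> real \<Rightarrow> real \<Rightarrow> real \<Rightarrow> real" where
  "det3 a11 a12 a13 a21 a22 a23 a31 a32 a33 =
     a11 * (a22 * a33 - a23 * a32) - a12 * (a21 * a33 - a23 * a31) + a13 * (a21 * a32 - a22 * a31)"

text \<open>Cyclic n-gon with distinct vertices on a circle, ordered anticlockwise:
  the vertices are at strictly increasing angles within one full turn.\<close>
definition cyclic_anticlockwise :: "nat \<Rightarrow> (nat \<Rightarrow> real) \<Rightarrow> (nat \<Rightarrow> real) \<Rightarrow> bool" where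
  "cyclic_anticlockwise n px py \<longleftrightarrow>
     (\<exists>cx cy r (\<theta>::nat \<Rightarrow> real). r > 0 \<and>
        (\<forall>i\<in>{1..n}. px i = cx + r * cos (\<theta> i) \<and> py i = cy + r * sin (\<theta> i)) \<and>
        (\<forall>i\<in>{1..<n}. \<theta> i < \<theta> (Suc i)) \<and> \<theta> n < \<theta> 1 + 2 * pi)"

end

theory Submission
  imports Defs
begin

(* On a circle of radius r, put the vertices at angles 2 u_i and let c_pq = 2 r sin (u_q - u_p) be
   the signed chord. Then x_pq = c_pq^2 and r S_pqs = c_pq c_qs c_ps (the signed form of
   abc = 4 R Area). Each determinant is linear in its S-entries, and after this substitution each
   of its four terms becomes a common product of four chords times one of S_bcd, S_acd, S_abd,
   S_abc. So every determinant is a product of chords times the alternating sum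
   S_bcd - S_acd + S_abd - S_abc, which vanishes for any four points of the plane. *)

definition signed_chord :: "real \<Rightarrow> (nat \<Rightarrow> real) \<Rightarrow> nat \<Rightarrow> nat \<Rightarrow> real" where
  "signed_chord r u p q = 2 * r * sin (u q - u p)"

lemma Sarea_alternating_sum:
  "Sarea px py q s t - Sarea px py p s t + Sarea px py p q t - Sarea px py p q s = 0"
  unfolding Sarea_def by algebra

lemma sqd_on_circle:
  assumes "\<forall>i\<in>A. px i = cx + r * cos (2 * u i) \<and> py i = cy + r * sin (2 * u i)"
    and "p \<in> A" "q \<in> A"
  shows "sqd px py p q = (signed_chord r u p q)\<^sup>2"
proof -
  have "px q - px p = r * (cos (2 * u q) - cos (2 * u p))"
    and "py q - py p = r * (sin (2 * u q) - sin (2 * u p))"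
    using assms by (auto simp: algebra_simps)
  then show ?thesis
    unfolding sqd_def signed_chord_def cos_double sin_double sin_diff
    using sin_cos_squared_add[of "u p"] sin_cos_squared_add[of "u q"] by algebra
qed

lemma Sarea_on_circle:
  assumes "\<forall>i\<in>A. px i = cx + r * cos (2 * u i) \<and> py i = cy + r * sin (2 * u i)"
    and "p \<in> A" "q \<in> A" "s \<in> A"
  shows "r * Sarea px py p q s
    = signed_chord r u p q * signed_chord r u q s * signed_chord r u p s"
proof -
  have "px q - px p = r * (cos (2 * u q) - cos (2 * u p))"
    and "py q - py p = r * (sin (2 * u q) - sin (2 * u p))"
    and "px s - px p = r * (cos (2 * u s) - cos (2 * u p))"
    and "py s - py p = r * (sin (2 * u s) - sin (2 * u p))"
    using assms by (auto simp: algebra_simps)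
  then show ?thesis
    unfolding Sarea_def signed_chord_def cos_double sin_double sin_diff
    using sin_cos_squared_add[of "u p"] sin_cos_squared_add[of "u q"]
      sin_cos_squared_add[of "u s"]
    by algebra
qed

lemma diamond_dets_eq_chord_products:
  fixes x ch :: "'i \<Rightarrow> 'i \<Rightarrow> real" and S :: "'i \<Rightarrow> 'i \<Rightarrow> 'i \<Rightarrow> real"
  assumes "r \<noteq> 0"
    and x_chord: "\<And>p q. p \<in> A \<Longrightarrow> q \<in> A \<Longrightarrow> x p q = (ch p q)\<^sup>2"
    and S_chord: "\<And>p q s. p \<in> A \<Longrightarrow> q \<in> A \<Longrightarrow> s \<in> A \<Longrightarrow>
      r * S p q s = ch p q * ch q s * ch p s"
    and A: "a \<in> A" "b \<in> A" "c \<in> A" "d \<in> A"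
  defines "\<Sigma> \<equiv> S b c d - S a c d + S a b d - S a b c"
  shows "det3 (x c d) (S a c d) (S b c d) (- x a b) (S a b c) (S a b d) 0 (x a c) (x b d)
           = ch a b * ch a c * ch b d * ch c d * \<Sigma>" (is ?first)
    and "det3 (x c d) (S a c d) (S b c d) (x a b) (S a b d) (S a b c) 0 (x a d) (x b c)
           = ch a b * ch a d * ch b c * ch c d * \<Sigma>" (is ?second)
    and "det3 (x b c) (S a b c) (S b c d) (- x a d) (S a c d) (S a b d) 0 (x a c) (x b d)
           = ch a c * ch a d * ch b c * ch b d * \<Sigma>" (is ?third)
proof -
  have S_eq: "S p q s = ch p q * ch q s * ch p s / r" if "p \<in> A" "q \<in> A" "s \<in> A" for p q s
    using S_chord[OF that] \<open>r \<noteq> 0\<close> by (simp add: eq_divide_eq mult.commute)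
  show ?first ?second ?third
    unfolding \<Sigma>_def det3_def x_chord[OF A(1,2)] x_chord[OF A(3,4)] x_chord[OF A(1,3)]
      x_chord[OF A(2,4)] x_chord[OF A(1,4)] x_chord[OF A(2,3)]
      S_eq[OF A(2-4)] S_eq[OF A(1,3,4)] S_eq[OF A(1,2,4)] S_eq[OF A(1-3)]
    by (simp_all add: field_simps power2_eq_square)
qed

lemma diamond_dets_vanish_on_circle:
  fixes px py \<theta> :: "nat \<Rightarrow> real"
  assumes circle: "\<forall>i\<in>A. px i = cx + r * cos (\<theta> i) \<and> py i = cy + r * sin (\<theta> i)"
    and abcd: "a \<in> A" "b \<in> A" "c \<in> A" "d \<in> A"
  shows "let x = sqd px py; S = Sarea px py in
     det3 (x c d) (S a c d) (S b c d) (- x a b) (S a b c) (S a b d) 0 (x a c) (x b d) = 0 \<and>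
     det3 (x c d) (S a c d) (S b c d) (x a b) (S a b d) (S a b c) 0 (x a d) (x b c) = 0 \<and>
     det3 (x b c) (S a b c) (S b c d) (- x a d) (S a c d) (S a b d) 0 (x a c) (x b d) = 0"
proof (cases "r = 0")
  case True
  then have "px i = cx" "py i = cy" if "i \<in> A" for i
    using circle that by auto
  with abcd show ?thesis
    by (simp add: Let_def det3_def sqd_def Sarea_def)
next
  case False
  define u where "u i = \<theta> i / 2" for i
  have half_angles: "\<forall>i\<in>A. px i = cx + r * cos (2 * u i) \<and> py i = cy + r * sin (2 * u i)"
    using circle by (simp add: u_def)
  show ?thesis
    using diamond_dets_eq_chord_products
        [where r = r and A = A and a = a and b = b and c = c and d = d
         and x = "sqd px py" and S = "Sarea px py" and ch = "signed_chord r u"]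
      sqd_on_circle[OF half_angles] Sarea_on_circle[OF half_angles] abcd False
    unfolding Let_def by (simp add: Sarea_alternating_sum)
qed

theorem corollary2p7:
  fixes n :: nat and px py :: "nat \<Rightarrow> real" and a b :: nat
  assumes "n \<ge> 3"
    and "cyclic_anticlockwise n px py"
    and "a \<in> {1..n}" and "b \<in> {1..n}"
  shows "let x = sqd px py; S = Sarea px py; a1 = modn n (a + 1); b1 = modn n (b + 1) in
     det3 (x b b1) (S a b b1) (S a1 b b1)
          (- x a a1) (S a a1 b) (S a a1 b1)
          0 (x a b) (x a1 b1) = 0 \<and>
     det3 (x b b1) (S a b b1) (S a1 b b1)
          (x a a1) (S a a1 b1) (S a a1 b)
          0 (x a b1) (x a1 b) = 0 \<and>
     det3 (x a1 b) (S a a1 b) (S a1 b b1)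
          (- x a b1) (S a b b1) (S a a1 b1)
          0 (x a b) (x a1 b1) = 0"
proof -
  obtain cx cy r \<theta> where
    circle: "\<forall>i\<in>{1..n}. px i = cx + r * cos (\<theta> i) \<and> py i = cy + r * sin (\<theta> i)"
    using assms(2) unfolding cyclic_anticlockwise_def by blast
  have modn_range: "modn n k \<in> {1..n}" for k
    using assms(1) unfolding modn_def by (auto simp: Suc_le_eq)
  show ?thesis
    using diamond_dets_vanish_on_circle[OF circle assms(3) modn_range assms(4) modn_range]
    by (simp add: Let_def)
qed

end
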